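(* Let $0<\delta\le 1$. The mechanism $\mathcal{SA}_\delta$ admits a pure Nash equilibrium for every collection $A$, it is anonymous, and it is $\delta$-Pareto efficient in all equilibria, i.e., for every collection $A$ every pure Nash equilibrium outcome $x$ of $\Gamma_{\mathcal{SA}_\delta}(A)$ is $\delta$-Pareto efficient.
   Context: Two players bargain over a collection (multiset) of $n$ alternatives $A=(a^k)_{k\in[n]}$, $a^k\in[0,1]^2$, $a^k_i$ being player $i$'s utility. A mechanism is a sequence $(M_n)_n$, $M_n$ consisting of signal sets $\Sigma_1(n),\Sigma_2(n)$ and a map $f_n:\Sigma_1(n)\times\Sigma_2(n)\to\Delta([n])$; with risk-neutral players it induces a game $\Gamma_M(A)$ whose payoffs are expected utilities, and the outcome of a profile is its expected utility vector. A mechanism is anonymous if $\Sigma_1(n)=\Sigma_2(n)$ and $f_n(\sigma_1,\sigma_2)=f_n(\sigma_2,\sigma_1)$ for all $n,\sigma_1,\sigma_2$. The mechanism $\mathcal{SA}_\delta$: each player submits $L_i\subseteq[n]$; the index is drawn from $UN([n])$ if $L_1=L_2=\emptyset$; from $UN(L_1\cup L_2)$ if $L_1\cap L_2=\emptyset\ne L_1\cup L_2$; and from $(1-\delta)UN(L_1\cap L_2)+\delta\,UN(L_1\cup L_2)$ if $L_1\cap L_2\ne\emptyset$ ($UN$ = uniform distribution). An allocation $x\in[0,1]^2$ is $\varepsilon$-Pareto efficient (w.r.t. $A$) if there is no $a\in A$ with $a_1>x_1+\varepsilon$ and $a_2>x_2+\varepsilon$. *)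

theory Defs
  imports "HOL-Analysis.Analysis"
begin

(* Indices [n] are rendered as {..<n} = {0,...,n-1}.
   A collection A = (a^k)_{k in [n]} is a function a :: nat => real * real,
   a k = (a^k_1, a^k_2), with values in [0,1]^2 on [n]. *)

definition is_collection :: "nat \<Rightarrow> (nat \<Rightarrow> real \<times> real) \<Rightarrow> bool" where
  "is_collection n a \<longleftrightarrow> (\<forall>k<n. fst (a k) \<in> {0..1} \<and> snd (a k) \<in> {0..1})"

definition is_distribution :: "nat \<Rightarrow> (nat \<Rightarrow> real) \<Rightarrow> bool" where
  "is_distribution n p \<longleftrightarrow> (\<forall>k. p k \<ge> 0) \<and> (\<forall>k. k \<ge> n \<longrightarrow> p k = 0) \<and> (\<Sum>k<n. p k) = 1"

definition is_mechanism ::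
  "(nat \<Rightarrow> 's1 set) \<Rightarrow> (nat \<Rightarrow> 's2 set) \<Rightarrow> (nat \<Rightarrow> 's1 \<Rightarrow> 's2 \<Rightarrow> nat \<Rightarrow> real) \<Rightarrow> bool" where
  "is_mechanism Sig1 Sig2 f \<longleftrightarrow>
     (\<forall>n \<ge> 1. \<forall>s1 \<in> Sig1 n. \<forall>s2 \<in> Sig2 n. is_distribution n (f n s1 s2))"

definition anonymous ::
  "(nat \<Rightarrow> 's set) \<Rightarrow> (nat \<Rightarrow> 's set) \<Rightarrow> (nat \<Rightarrow> 's \<Rightarrow> 's \<Rightarrow> nat \<Rightarrow> real) \<Rightarrow> bool" where
  "anonymous Sig1 Sig2 f \<longleftrightarrow>
     (\<forall>n. Sig1 n = Sig2 n) \<and> (\<forall>n s1 s2. f n s1 s2 = f n s2 s1)"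

definition payoff1 :: "(nat \<Rightarrow> 's1 \<Rightarrow> 's2 \<Rightarrow> nat \<Rightarrow> real) \<Rightarrow> nat \<Rightarrow> (nat \<Rightarrow> real \<times> real) \<Rightarrow> 's1 \<Rightarrow> 's2 \<Rightarrow> real" where
  "payoff1 f n a s1 s2 = (\<Sum>k<n. f n s1 s2 k * fst (a k))"

definition payoff2 :: "(nat \<Rightarrow> 's1 \<Rightarrow> 's2 \<Rightarrow> nat \<Rightarrow> real) \<Rightarrow> nat \<Rightarrow> (nat \<Rightarrow> real \<times> real) \<Rightarrow> 's1 \<Rightarrow> 's2 \<Rightarrow> real" where
  "payoff2 f n a s1 s2 = (\<Sum>k<n. f n s1 s2 k * snd (a k))"

definition outcome :: "(nat \<Rightarrow> 's1 \<Rightarrow> 's2 \<Rightarrow> nat \<Rightarrow> real) \<Rightarrow> nat \<Rightarrow> (nat \<Rightarrow> real \<times> real) \<Rightarrow> 's1 \<Rightarrow> 's2 \<Rightarrow> real \<times> real" where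
  "outcome f n a s1 s2 = (payoff1 f n a s1 s2, payoff2 f n a s1 s2)"

definition pure_NE ::
  "(nat \<Rightarrow> 's1 set) \<Rightarrow> (nat \<Rightarrow> 's2 set) \<Rightarrow> (nat \<Rightarrow> 's1 \<Rightarrow> 's2 \<Rightarrow> nat \<Rightarrow> real) \<Rightarrow> nat \<Rightarrow> (nat \<Rightarrow> real \<times> real) \<Rightarrow> 's1 \<Rightarrow> 's2 \<Rightarrow> bool" where
  "pure_NE Sig1 Sig2 f n a s1 s2 \<longleftrightarrow>
     s1 \<in> Sig1 n \<and> s2 \<in> Sig2 n \<and>
     (\<forall>t1 \<in> Sig1 n. payoff1 f n a t1 s2 \<le> payoff1 f n a s1 s2) \<and>
     (\<forall>t2 \<in> Sig2 n. payoff2 f n a s1 t2 \<le> payoff2 f n a s1 s2)"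

definition eps_pareto_efficient :: "real \<Rightarrow> nat \<Rightarrow> (nat \<Rightarrow> real \<times> real) \<Rightarrow> real \<times> real \<Rightarrow> bool" where
  "eps_pareto_efficient \<epsilon> n a x \<longleftrightarrow>
     \<not> (\<exists>k<n. fst (a k) > fst x + \<epsilon> \<and> snd (a k) > snd x + \<epsilon>)"

definition UN_dist :: "nat set \<Rightarrow> nat \<Rightarrow> real" where
  "UN_dist S k = (if k \<in> S then 1 / real (card S) else 0)"

definition SA_Sig :: "nat \<Rightarrow> nat set set" where
  "SA_Sig n = Pow {..<n}"

definition SA_f :: "real \<Rightarrow> nat \<Rightarrow> nat set \<Rightarrow> nat set \<Rightarrow> nat \<Rightarrow> real" where
  "SA_f \<delta> n L1 L2 =
     (if L1 = {} \<and> L2 = {} then UN_dist {..<n}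
      else if L1 \<inter> L2 = {} then UN_dist (L1 \<union> L2)
      else (\<lambda>k. (1 - \<delta>) * UN_dist (L1 \<inter> L2) k + \<delta> * UN_dist (L1 \<union> L2) k))"

end

theory Submission
  imports Defs
begin

text \<open>Existence: take a minimal set \<open>U\<close> of alternatives such that every alternative outside \<open>U\<close>
  is strictly worse for both players than their mean utility over \<open>U\<close>; minimality forces every
  member of \<open>U\<close> to reach at least one player's mean. Against an opponent list inside \<open>U\<close>, a
  deviation can only replace the uniform lottery over \<open>U\<close> by one over a set whose mean is not
  larger, so splitting \<open>U\<close> between the players (sharing one alternative that beats both means,
  if there is one) is an equilibrium.

  Efficiency: if alternative \<open>k\<close> beat the equilibrium outcome by more than \<open>\<delta>\<close> for both players,
  then some player either sees \<open>k\<close> on the opponent's list and gets at least \<open>1 - \<delta>\<close> times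
  its utility for \<open>k\<close> by naming \<open>k\<close> alone, or sees \<open>k\<close> on neither list and raises the mean of the union by adding it.\<close>

definition mean :: "'a set \<Rightarrow> ('a \<Rightarrow> real) \<Rightarrow> real" where
  "mean S u = sum u S / real (card S)"

lemma mean_singleton [simp]: "mean {k} u = u k"
  by (simp add: mean_def)

lemma mean_const: "finite S \<Longrightarrow> S \<noteq> {} \<Longrightarrow> mean S (\<lambda>_. c) = c"
  by (simp add: mean_def)

lemma mean_nonneg: "(\<And>j. j \<in> S \<Longrightarrow> 0 \<le> u j) \<Longrightarrow> 0 \<le> mean S u"
  unfolding mean_def by (simp add: sum_nonneg)

lemma mean_le_bound:
  assumes "finite S" "S \<noteq> {}" "\<And>j. j \<in> S \<Longrightarrow> u j \<le> c"
  shows "mean S u \<le> c"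
proof -
  have "real (card S) > 0" using assms(1,2) by (simp add: card_gt_0_iff)
  then show ?thesis
    using sum_bounded_above[of S u c] assms(3) by (simp add: mean_def pos_divide_le_eq mult.commute)
qed

lemma sum_diff_const_eq_mean:
  assumes "finite S"
  shows "(\<Sum>j\<in>S. u j - v) = real (card S) * (mean S u - v)"
  using assms by (cases "S = {}") (simp_all add: mean_def sum_subtractf algebra_simps)

lemma mean_le_mean_exchange:
  assumes "finite X" "X \<noteq> {}" "finite U"
    and "\<And>j. j \<in> U - X \<Longrightarrow> mean U u \<le> u j"
    and "\<And>j. j \<in> X - U \<Longrightarrow> u j \<le> mean U u"
  shows "mean X u \<le> mean U u"
proof -
  let ?d = "\<lambda>j. u j - mean U u"
  have "sum ?d X = sum ?d (X \<inter> U) + sum ?d (X - U)"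
    using assms(1) by (rule sum.Int_Diff)
  also have "\<dots> \<le> sum ?d (U \<inter> X) + sum ?d (U - X)"
  proof -
    have "sum ?d (X - U) \<le> 0" using assms(5) by (intro sum_nonpos) auto
    moreover have "0 \<le> sum ?d (U - X)" using assms(4) by (intro sum_nonneg) auto
    ultimately show ?thesis by (simp add: Int_commute)
  qed
  also have "\<dots> = sum ?d U"
    using assms(3) by (rule sum.Int_Diff[symmetric])
  also have "\<dots> = 0"
    using sum_diff_const_eq_mean[OF assms(3)] by simp
  finally show ?thesis
    using sum_diff_const_eq_mean[OF assms(1)] assms(1,2)
    by (simp add: mult_le_0_iff card_gt_0_iff)
qed

lemma mean_insert:
  assumes "finite V" "k \<notin> V"
  shows "(real (card V) + 1) * mean (insert k V) u = u k + real (card V) * mean V u"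
  using assms by (simp add: mean_def add.commute)

lemma mean_insert_le_iff:
  assumes "finite V" "V \<noteq> {}" "k \<notin> V"
  shows "mean (insert k V) u \<le> mean V u \<longleftrightarrow> u k \<le> mean V u"
proof -
  define c where "c = real (card V)"
  have "c > 0" using assms by (simp add: c_def card_gt_0_iff)
  have "(c + 1) * mean (insert k V) u = u k + c * mean V u"
    unfolding c_def by (rule mean_insert[OF assms(1,3)])
  then have "mean (insert k V) u \<le> mean V u \<longleftrightarrow> u k + c * mean V u \<le> (c + 1) * mean V u"
    using \<open>c > 0\<close> by (metis add_pos_pos mult_le_cancel_left_pos zero_less_one)
  then show ?thesis by (simp add: algebra_simps)
qed

lemma le_mean_insert_iff:
  assumes "finite V" "V \<noteq> {}" "k \<notin> V"
  shows "u k \<le> mean (insert k V) u \<longleftrightarrow> u k \<le> mean V u"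
proof -
  define c where "c = real (card V)"
  have "c > 0" using assms by (simp add: c_def card_gt_0_iff)
  have "(c + 1) * mean (insert k V) u = u k + c * mean V u"
    unfolding c_def by (rule mean_insert[OF assms(1,3)])
  then have "u k \<le> mean (insert k V) u \<longleftrightarrow> (c + 1) * u k \<le> u k + c * mean V u"
    using \<open>c > 0\<close> by (metis add_pos_pos mult_le_cancel_left_pos zero_less_one)
  also have "\<dots> \<longleftrightarrow> c * u k \<le> c * mean V u" by (simp add: algebra_simps)
  finally show ?thesis using \<open>c > 0\<close> by simp
qed

definition is_core :: "'a set \<Rightarrow> ('a \<Rightarrow> real) \<Rightarrow> ('a \<Rightarrow> real) \<Rightarrow> 'a set \<Rightarrow> bool" where
  "is_core I g h U \<longleftrightarrow> U \<noteq> {} \<and> U \<subseteq> I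
     \<and> (\<forall>j\<in>I - U. g j < mean U g \<and> h j < mean U h)
     \<and> (\<forall>j\<in>U. mean U g \<le> g j \<or> mean U h \<le> h j)"

text \<open>Removing an element below both means lowers neither mean.\<close>

lemma exists_core:
  assumes "finite I" "I \<noteq> {}"
  shows "\<exists>U. is_core I g h U"
proof -
  define P where "P U \<longleftrightarrow> U \<noteq> {} \<and> U \<subseteq> I \<and> (\<forall>j\<in>I - U. g j < mean U g \<and> h j < mean U h)"
    for U
  have "P I" using assms(2) by (simp add: P_def)
  then obtain U where PU: "P U" and min: "\<And>V. P V \<Longrightarrow> card U \<le> card V"
    using ex_has_least_nat[of P I card] by blast
  have U_sub: "U \<subseteq> I" and out: "\<And>i. i \<in> I - U \<Longrightarrow> g i < mean U g \<and> h i < mean U h"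
    using PU by (auto simp: P_def)
  have fin: "finite U" using U_sub assms(1) by (rule finite_subset)
  have "mean U g \<le> g j \<or> mean U h \<le> h j" if j: "j \<in> U" for j
  proof (rule ccontr)
    assume "\<not> ?thesis"
    then have gj: "g j < mean U g" and hj: "h j < mean U h" by auto
    define V where "V = U - {j}"
    have U: "U = insert j V" "j \<notin> V" "finite V" using j fin by (auto simp: V_def)
    have V: "V \<noteq> {}"
      using gj U by auto
    have "mean U u \<le> mean V u" if "u j \<le> mean U u" for u
      using that unfolding U(1) le_mean_insert_iff[OF U(3) V U(2)] mean_insert_le_iff[OF U(3) V U(2)] .
    then have means: "mean U g \<le> mean V g" "mean U h \<le> mean V h"
      using gj hj by auto
    have "g i < mean V g \<and> h i < mean V h" if "i \<in> I - V" for i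
    proof (cases "i = j")
      case True
      then show ?thesis using gj hj means by simp
    next
      case False
      then have "i \<in> I - U" using that U(1) by simp
      then show ?thesis using out[of i] means by simp
    qed
    then have "P V"
      using V U_sub U(1) by (auto simp: P_def)
    with min have "card U \<le> card V" .
    moreover have "card V < card U" unfolding V_def using fin j by (rule card_Diff1_less)
    ultimately show False by simp
  qed
  with PU have "is_core I g h U" by (simp add: is_core_def P_def)
  then show ?thesis ..
qed

definition expected_value :: "nat \<Rightarrow> (nat \<Rightarrow> real) \<Rightarrow> (nat \<Rightarrow> real) \<Rightarrow> real" where
  "expected_value n p u = (\<Sum>k<n. p k * u k)"

lemma expected_value_UN_dist:
  assumes "S \<subseteq> {..<n}"
  shows "expected_value n (UN_dist S) u = mean S u"
proof -
  have "expected_value n (UN_dist S) u = (\<Sum>k<n. if k \<in> S then u k / real (card S) else 0)"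
    unfolding expected_value_def UN_dist_def by (rule sum.cong) auto
  also have "\<dots> = (\<Sum>k\<in>{..<n} \<inter> S. u k / real (card S))"
    by (simp add: sum.inter_restrict)
  also have "{..<n} \<inter> S = S" using assms by auto
  finally show ?thesis by (simp add: mean_def sum_divide_distrib)
qed

lemma SA_f_commute: "SA_f \<delta> n L1 L2 = SA_f \<delta> n L2 L1"
  unfolding SA_f_def by (simp add: Int_commute Un_commute conj_commute)

lemma expected_value_SA_f:
  assumes "L1 \<subseteq> {..<n}" "L2 \<subseteq> {..<n}"
  shows "expected_value n (SA_f \<delta> n L1 L2) u =
    (if L1 = {} \<and> L2 = {} then mean {..<n} u
     else if L1 \<inter> L2 = {} then mean (L1 \<union> L2) u
     else (1 - \<delta>) * mean (L1 \<inter> L2) u + \<delta> * mean (L1 \<union> L2) u)"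
proof -
  have "expected_value n (\<lambda>k. (1 - \<delta>) * UN_dist (L1 \<inter> L2) k + \<delta> * UN_dist (L1 \<union> L2) k) u
      = (1 - \<delta>) * expected_value n (UN_dist (L1 \<inter> L2)) u + \<delta> * expected_value n (UN_dist (L1 \<union> L2)) u"
    by (simp add: expected_value_def distrib_right sum.distrib sum_distrib_left mult.assoc)
  moreover have "L1 \<inter> L2 \<subseteq> {..<n}" "L1 \<union> L2 \<subseteq> {..<n}" using assms by auto
  ultimately show ?thesis
    by (simp add: SA_f_def expected_value_UN_dist)
qed

lemma payoff1_SA_f: "payoff1 (SA_f \<delta>) n a L1 L2 = expected_value n (SA_f \<delta> n L1 L2) (\<lambda>k. fst (a k))"
  by (simp add: payoff1_def expected_value_def)

lemma payoff2_SA_f: "payoff2 (SA_f \<delta>) n a L1 L2 = expected_value n (SA_f \<delta> n L2 L1) (\<lambda>k. snd (a k))"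
  by (simp add: payoff2_def expected_value_def SA_f_commute)

lemma is_distribution_SA_f:
  assumes "0 \<le> \<delta>" "\<delta> \<le> 1" "n \<ge> 1" "L1 \<subseteq> {..<n}" "L2 \<subseteq> {..<n}"
  shows "is_distribution n (SA_f \<delta> n L1 L2)"
proof -
  have "{..<n} \<noteq> {}" "finite (L1 \<union> L2)" "finite (L1 \<inter> L2)"
    using assms(3-5) by (auto simp: lessThan_empty_iff intro: finite_subset)
  then have "expected_value n (SA_f \<delta> n L1 L2) (\<lambda>_. 1) = 1"
    using expected_value_SA_f[OF assms(4,5)] by (auto simp: mean_const)
  moreover have "SA_f \<delta> n L1 L2 k \<ge> 0" for k
    using assms(1,2) by (simp add: SA_f_def UN_dist_def)
  moreover have "SA_f \<delta> n L1 L2 k = 0" if "k \<ge> n" for k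
    using assms(4,5) that by (auto simp: SA_f_def UN_dist_def)
  ultimately show ?thesis by (simp add: is_distribution_def expected_value_def)
qed

definition SA_best_response :: "real \<Rightarrow> nat \<Rightarrow> (nat \<Rightarrow> real) \<Rightarrow> nat set \<Rightarrow> nat set \<Rightarrow> bool" where
  "SA_best_response \<delta> n u S L \<longleftrightarrow>
     (\<forall>T\<subseteq>{..<n}. expected_value n (SA_f \<delta> n T L) u \<le> expected_value n (SA_f \<delta> n S L) u)"

lemma pure_NE_SA_iff:
  "pure_NE SA_Sig SA_Sig (SA_f \<delta>) n a L1 L2 \<longleftrightarrow>
     L1 \<subseteq> {..<n} \<and> L2 \<subseteq> {..<n}
     \<and> SA_best_response \<delta> n (\<lambda>k. fst (a k)) L1 L2 \<and> SA_best_response \<delta> n (\<lambda>k. snd (a k)) L2 L1"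
  by (auto simp: pure_NE_def SA_Sig_def SA_best_response_def payoff1_SA_f payoff2_SA_f)

lemma expected_value_SA_f_le_core_bound:
  assumes "0 \<le> \<delta>" "\<delta> \<le> 1" "L \<subseteq> U" "U \<subseteq> {..<n}" "U \<noteq> {}"
    and above: "\<And>j. j \<in> U - L \<Longrightarrow> mean U u \<le> u j"
    and below: "\<And>j. j \<in> {..<n} - U \<Longrightarrow> u j \<le> mean U u"
    and bound: "\<And>j. j \<in> L \<Longrightarrow> u j \<le> c"
    and T: "T \<subseteq> {..<n}"
  shows "expected_value n (SA_f \<delta> n T L) u \<le> max (mean U u) ((1 - \<delta>) * c + \<delta> * mean U u)"
proof -
  have fin: "finite X" if "X \<subseteq> {..<n}" for X
    using that by (rule finite_subset) simp
  have mean_le: "mean X u \<le> mean U u" if "L \<subseteq> X" "X \<subseteq> {..<n}" "X \<noteq> {}" for X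
    using that above below assms(4) by (intro mean_le_mean_exchange fin) auto
  have L: "L \<subseteq> {..<n}" using assms(3,4) by auto
  consider (empty) "T = {}" "L = {}" | (disjoint) "T \<union> L \<noteq> {}" "T \<inter> L = {}" | (overlap) "T \<inter> L \<noteq> {}"
    by blast
  then show ?thesis
  proof cases
    case empty
    have "{..<n} \<noteq> {}" using assms(4,5) by blast
    then show ?thesis
      using expected_value_SA_f[OF T L] mean_le[of "{..<n}"] empty by auto
  next
    case disjoint
    then show ?thesis
      using expected_value_SA_f[OF T L] mean_le[of "T \<union> L"] T L by auto
  next
    case overlap
    have "mean (T \<inter> L) u \<le> c"
      using overlap bound fin[of "T \<inter> L"] T by (intro mean_le_bound) auto
    moreover have "mean (T \<union> L) u \<le> mean U u"
      using overlap mean_le[of "T \<union> L"] T L by auto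
    ultimately have "(1 - \<delta>) * mean (T \<inter> L) u + \<delta> * mean (T \<union> L) u \<le> (1 - \<delta>) * c + \<delta> * mean U u"
      using assms(1,2) by (intro add_mono mult_left_mono) auto
    then show ?thesis
      using expected_value_SA_f[OF T L] overlap by auto
  qed
qed

lemma max_eq_convex_comb:
  fixes v x \<delta> :: real
  assumes "0 \<le> \<delta>" "\<delta> \<le> 1" "v \<le> x"
  shows "max v ((1 - \<delta>) * x + \<delta> * v) = (1 - \<delta>) * x + \<delta> * v"
proof -
  have "(1 - \<delta>) * v \<le> (1 - \<delta>) * x" using assms by (intro mult_left_mono) auto
  then show ?thesis by (simp add: algebra_simps)
qed

lemma SA_best_response_if_core_bound_attained:
  assumes "0 \<le> \<delta>" "\<delta> \<le> 1" "L \<subseteq> U" "U \<subseteq> {..<n}" "U \<noteq> {}"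
    and "\<And>j. j \<in> U - L \<Longrightarrow> mean U u \<le> u j"
    and "\<And>j. j \<in> {..<n} - U \<Longrightarrow> u j \<le> mean U u"
    and "\<And>j. j \<in> L \<Longrightarrow> u j \<le> c"
    and "max (mean U u) ((1 - \<delta>) * c + \<delta> * mean U u) \<le> expected_value n (SA_f \<delta> n S L) u"
  shows "SA_best_response \<delta> n u S L"
  using expected_value_SA_f_le_core_bound[OF assms(1-8)] assms(9)
  unfolding SA_best_response_def by (meson order_trans)

lemma SA_equilibrium_if_no_dominant:
  assumes "0 \<le> \<delta>" "\<delta> \<le> 1" and core: "is_core {..<n} g h U"
    and no_dominant: "\<And>k. k \<in> U \<Longrightarrow> \<not> (mean U g < g k \<and> mean U h < h k)"
  shows "\<exists>L1 L2. L1 \<subseteq> {..<n} \<and> L2 \<subseteq> {..<n}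
           \<and> SA_best_response \<delta> n g L1 L2 \<and> SA_best_response \<delta> n h L2 L1"
proof -
  let ?v1 = "mean U g" and ?v2 = "mean U h"
  define L1 where "L1 = {j\<in>U. ?v1 \<le> g j \<and> h j \<le> ?v2}"
  define L2 where "L2 = U - L1"
  have U: "U \<noteq> {}" "U \<subseteq> {..<n}" and inside: "\<And>j. j \<in> U \<Longrightarrow> ?v1 \<le> g j \<or> ?v2 \<le> h j"
    and outside: "\<And>j. j \<in> {..<n} - U \<Longrightarrow> g j \<le> ?v1" "\<And>j. j \<in> {..<n} - U \<Longrightarrow> h j \<le> ?v2"
    using core by (auto simp: is_core_def less_imp_le)
  have L: "L1 \<subseteq> {..<n}" "L2 \<subseteq> {..<n}" "L1 \<union> L2 = U" "L2 \<union> L1 = U" "L1 \<inter> L2 = {}" "L2 \<inter> L1 = {}"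
    using U by (auto simp: L1_def L2_def)
  have nonempty: "\<not> (L1 = {} \<and> L2 = {})" "\<not> (L2 = {} \<and> L1 = {})" using L U by auto
  have "SA_best_response \<delta> n g L1 L2"
  proof (rule SA_best_response_if_core_bound_attained[OF assms(1,2) _ U(2,1), where c = ?v1])
    show "\<And>j. j \<in> L2 \<Longrightarrow> g j \<le> ?v1"
      using no_dominant by (force simp: L2_def L1_def)
    show "max ?v1 ((1 - \<delta>) * ?v1 + \<delta> * ?v1) \<le> expected_value n (SA_f \<delta> n L1 L2) g"
      using expected_value_SA_f[OF L(1,2)] L nonempty by (simp add: algebra_simps)
  qed (use outside in \<open>auto simp: L1_def L2_def\<close>)
  moreover have "SA_best_response \<delta> n h L2 L1"
  proof (rule SA_best_response_if_core_bound_attained[OF assms(1,2) _ U(2,1), where c = ?v2])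
    show "\<And>j. j \<in> U - L1 \<Longrightarrow> ?v2 \<le> h j"
      using inside by (force simp: L1_def)
    show "max ?v2 ((1 - \<delta>) * ?v2 + \<delta> * ?v2) \<le> expected_value n (SA_f \<delta> n L2 L1) h"
      using expected_value_SA_f[OF L(2,1)] L nonempty by (simp add: algebra_simps)
  qed (use outside in \<open>auto simp: L1_def L2_def\<close>)
  ultimately show ?thesis using L(1,2) by blast
qed

text \<open>The shared alternative \<open>k\<close> maximises \<open>g + h\<close> among the alternatives above both means;
  this is what makes \<open>k\<close> the best alternative on player 2's list for player 1.\<close>

lemma SA_equilibrium_if_dominant:
  assumes "0 \<le> \<delta>" "\<delta> \<le> 1" and core: "is_core {..<n} g h U"
    and k: "k \<in> U" "mean U g < g k" "mean U h < h k"
    and k_max: "\<And>j. j \<in> U \<Longrightarrow> mean U g < g j \<Longrightarrow> mean U h < h j \<Longrightarrow> g j + h j \<le> g k + h k"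
  shows "\<exists>L1 L2. L1 \<subseteq> {..<n} \<and> L2 \<subseteq> {..<n}
           \<and> SA_best_response \<delta> n g L1 L2 \<and> SA_best_response \<delta> n h L2 L1"
proof -
  let ?v1 = "mean U g" and ?v2 = "mean U h"
  define L1 where "L1 = {j\<in>U. ?v1 \<le> g j \<and> h j \<le> h k}"
  define L2 where "L2 = insert k (U - L1)"
  have U: "U \<noteq> {}" "U \<subseteq> {..<n}" and inside: "\<And>j. j \<in> U \<Longrightarrow> ?v1 \<le> g j \<or> ?v2 \<le> h j"
    and outside: "\<And>j. j \<in> {..<n} - U \<Longrightarrow> g j \<le> ?v1" "\<And>j. j \<in> {..<n} - U \<Longrightarrow> h j \<le> ?v2"
    using core by (auto simp: is_core_def less_imp_le)
  have "k \<in> L1" using k by (simp add: L1_def)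
  then have L: "L1 \<subseteq> {..<n}" "L2 \<subseteq> {..<n}" "L1 \<union> L2 = U" "L2 \<union> L1 = U" "L1 \<inter> L2 = {k}" "L2 \<inter> L1 = {k}"
    using U k by (auto simp: L1_def L2_def)
  have nonempty: "\<not> (L1 = {} \<and> L2 = {})" "\<not> (L2 = {} \<and> L1 = {})" using L U by auto
  have "SA_best_response \<delta> n g L1 L2"
  proof (rule SA_best_response_if_core_bound_attained[OF assms(1,2) _ U(2,1), where c = "g k"])
    show "g j \<le> g k" if "j \<in> L2" for j
    proof (rule ccontr)
      assume "\<not> g j \<le> g k"
      moreover have "j \<in> U" "j \<noteq> k \<Longrightarrow> \<not> (?v1 \<le> g j \<and> h j \<le> h k)"
        using that k by (auto simp: L2_def L1_def)
      ultimately show False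
        using k_max[of j] k by force
    qed
    show "max ?v1 ((1 - \<delta>) * g k + \<delta> * ?v1) \<le> expected_value n (SA_f \<delta> n L1 L2) g"
      using expected_value_SA_f[OF L(1,2)] L nonempty k(2) assms(1,2)
      by (simp add: max_eq_convex_comb less_imp_le)
  qed (use outside k in \<open>auto simp: L1_def L2_def\<close>)
  moreover have "SA_best_response \<delta> n h L2 L1"
  proof (rule SA_best_response_if_core_bound_attained[OF assms(1,2) _ U(2,1), where c = "h k"])
    show "?v2 \<le> h j" if "j \<in> U - L1" for j
      using that inside[of j] k by (force simp: L1_def)
    show "max ?v2 ((1 - \<delta>) * h k + \<delta> * ?v2) \<le> expected_value n (SA_f \<delta> n L2 L1) h"
      using expected_value_SA_f[OF L(2,1)] L nonempty k(3) assms(1,2)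
      by (simp add: max_eq_convex_comb less_imp_le)
  qed (use outside in \<open>auto simp: L1_def L2_def\<close>)
  ultimately show ?thesis using L(1,2) by blast
qed

lemma SA_pure_NE_exists:
  assumes "0 \<le> \<delta>" "\<delta> \<le> 1" "n \<ge> 1"
  shows "\<exists>L1 L2. pure_NE SA_Sig SA_Sig (SA_f \<delta>) n a L1 L2"
proof -
  define g h where "g = (\<lambda>k. fst (a k))" and "h = (\<lambda>k. snd (a k))"
  obtain U where core: "is_core {..<n} g h U"
    using exists_core[of "{..<n}" g h] assms(3) by (auto simp: lessThan_empty_iff)
  define D where "D = {k\<in>U. mean U g < g k \<and> mean U h < h k}"
  have "\<exists>L1 L2. L1 \<subseteq> {..<n} \<and> L2 \<subseteq> {..<n}
           \<and> SA_best_response \<delta> n g L1 L2 \<and> SA_best_response \<delta> n h L2 L1"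
  proof (cases "D = {}")
    case True
    then show ?thesis
      by (intro SA_equilibrium_if_no_dominant[OF assms(1,2) core]) (auto simp: D_def)
  next
    case False
    have "finite D" using core by (auto simp: D_def is_core_def intro: finite_subset)
    then have "Max ((\<lambda>j. g j + h j) ` D) \<in> (\<lambda>j. g j + h j) ` D" using False by simp
    then obtain k where "k \<in> D" and "g k + h k = Max ((\<lambda>j. g j + h j) ` D)" by auto
    moreover have "g j + h j \<le> Max ((\<lambda>j. g j + h j) ` D)" if "j \<in> D" for j
      using \<open>finite D\<close> that by simp
    ultimately show ?thesis
      by (intro SA_equilibrium_if_dominant[OF assms(1,2) core, of k]) (auto simp: D_def)
  qed
  then show ?thesis by (simp add: pure_NE_SA_iff g_def h_def)
qed

lemma SA_best_response_ge_unchosen: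
  assumes "0 < \<delta>" "S \<subseteq> {..<n}" "L \<subseteq> {..<n}" "SA_best_response \<delta> n u S L"
    and k: "k < n" "k \<notin> S \<union> L"
  shows "u k \<le> expected_value n (SA_f \<delta> n S L) u"
proof -
  let ?x = "expected_value n (SA_f \<delta> n S L) u"
  have dev: "expected_value n (SA_f \<delta> n T L) u \<le> ?x" if "T \<subseteq> {..<n}" for T
    using assms(4) that by (simp add: SA_best_response_def)
  show ?thesis
  proof (cases "S \<union> L = {}")
    case True
    then show ?thesis
      using dev[of "{k}"] expected_value_SA_f[of "{k}" n L] k assms(3) by auto
  next
    case nonempty: False
    let ?U = "S \<union> L"
    have U: "finite ?U" using assms(2,3) by (auto intro: finite_subset)
    have "expected_value n (SA_f \<delta> n (S - L) L) u = mean ?U u"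
      using assms(2,3) nonempty by (subst expected_value_SA_f) auto
    then have "mean ?U u \<le> ?x"
      using dev[of "S - L"] assms(2) by auto
    moreover have "mean (insert k ?U) u \<le> mean ?U u"
    proof (cases "S \<inter> L = {}")
      case True
      have "?x = mean ?U u"
        using assms(2,3) nonempty True by (subst expected_value_SA_f) auto
      moreover have "expected_value n (SA_f \<delta> n (insert k S) L) u = mean (insert k ?U) u"
        using assms(2,3) k True by (subst expected_value_SA_f) auto
      ultimately show ?thesis using dev[of "insert k S"] assms(2) k by simp
    next
      case False
      have "?x = (1 - \<delta>) * mean (S \<inter> L) u + \<delta> * mean ?U u"
        using assms(2,3) False by (subst expected_value_SA_f) auto
      moreover have "expected_value n (SA_f \<delta> n (insert k S) L) u
          = (1 - \<delta>) * mean (S \<inter> L) u + \<delta> * mean (insert k ?U) u"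
        using assms(2,3) k False by (subst expected_value_SA_f) auto
      ultimately have "\<delta> * mean (insert k ?U) u \<le> \<delta> * mean ?U u"
        using dev[of "insert k S"] assms(2) k by simp
      then show ?thesis using assms(1) by simp
    qed
    then have "u k \<le> mean ?U u"
      using mean_insert_le_iff[OF U nonempty] k by simp
    ultimately show ?thesis by linarith
  qed
qed

lemma SA_best_response_ge:
  assumes "0 < \<delta>" "\<delta> \<le> 1" "S \<subseteq> {..<n}" "L \<subseteq> {..<n}" "SA_best_response \<delta> n u S L"
    and u: "\<And>j. j < n \<Longrightarrow> 0 \<le> u j \<and> u j \<le> 1"
    and k: "k < n" "k \<in> L \<or> k \<notin> S"
  shows "u k \<le> expected_value n (SA_f \<delta> n S L) u + \<delta>"
proof (cases "k \<in> L")
  case True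
  have "{k} \<subseteq> {..<n}" using k by simp
  then have "expected_value n (SA_f \<delta> n {k} L) u \<le> expected_value n (SA_f \<delta> n S L) u"
    using assms(5) by (simp add: SA_best_response_def)
  moreover have "expected_value n (SA_f \<delta> n {k} L) u = u k - \<delta> * u k + \<delta> * mean L u"
    using expected_value_SA_f[OF \<open>{k} \<subseteq> {..<n}\<close> assms(4)] True
    by (simp add: insert_absorb left_diff_distrib)
  moreover have "0 \<le> \<delta> * mean L u"
    using assms(1,4) u by (intro mult_nonneg_nonneg mean_nonneg) auto
  moreover have "\<delta> * u k \<le> \<delta>" using assms(1) u[OF k(1)] by (simp add: mult_left_le)
  ultimately show ?thesis by linarith
next
  case False
  then show ?thesis
    using SA_best_response_ge_unchosen[OF assms(1,3,4,5) k(1)] k(2) assms(1) by simp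
qed

lemma SA_pure_NE_eps_pareto_efficient:
  assumes "0 < \<delta>" "\<delta> \<le> 1" "is_collection n a" "pure_NE SA_Sig SA_Sig (SA_f \<delta>) n a L1 L2"
  shows "eps_pareto_efficient \<delta> n a (outcome (SA_f \<delta>) n a L1 L2)"
proof -
  have L: "L1 \<subseteq> {..<n}" "L2 \<subseteq> {..<n}"
    and br: "SA_best_response \<delta> n (\<lambda>k. fst (a k)) L1 L2" "SA_best_response \<delta> n (\<lambda>k. snd (a k)) L2 L1"
    using assms(4) unfolding pure_NE_SA_iff by auto
  have u: "\<And>j. j < n \<Longrightarrow> 0 \<le> fst (a j) \<and> fst (a j) \<le> 1" "\<And>j. j < n \<Longrightarrow> 0 \<le> snd (a j) \<and> snd (a j) \<le> 1"
    using assms(3) by (auto simp: is_collection_def)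
  have "fst (a k) \<le> payoff1 (SA_f \<delta>) n a L1 L2 + \<delta> \<or> snd (a k) \<le> payoff2 (SA_f \<delta>) n a L1 L2 + \<delta>"
    if "k < n" for k
  proof (cases "k \<in> L2 \<or> k \<notin> L1")
    case True
    then show ?thesis
      using SA_best_response_ge[OF assms(1,2) L br(1) u(1) that] by (simp add: payoff1_SA_f)
  next
    case False
    then show ?thesis
      using SA_best_response_ge[OF assms(1,2) L(2,1) br(2) u(2) that] by (simp add: payoff2_SA_f)
  qed
  then show ?thesis
    unfolding eps_pareto_efficient_def outcome_def fst_conv snd_conv by (meson not_less)
qed

theorem corollary2:
  fixes \<delta> :: real
  assumes "0 < \<delta>" and "\<delta> \<le> 1"
  shows "is_mechanism SA_Sig SA_Sig (SA_f \<delta>)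
       \<and> (\<forall>n \<ge> 1. \<forall>a. is_collection n a \<longrightarrow>
              (\<exists>L1 L2. pure_NE SA_Sig SA_Sig (SA_f \<delta>) n a L1 L2))
       \<and> anonymous SA_Sig SA_Sig (SA_f \<delta>)
       \<and> (\<forall>n \<ge> 1. \<forall>a. is_collection n a \<longrightarrow>
              (\<forall>L1 L2. pure_NE SA_Sig SA_Sig (SA_f \<delta>) n a L1 L2 \<longrightarrow>
                 eps_pareto_efficient \<delta> n a (outcome (SA_f \<delta>) n a L1 L2)))"
proof (intro conjI)
  show "is_mechanism SA_Sig SA_Sig (SA_f \<delta>)"
    using assms by (auto simp: is_mechanism_def SA_Sig_def intro: is_distribution_SA_f)
  show "anonymous SA_Sig SA_Sig (SA_f \<delta>)"
    by (auto simp: anonymous_def intro: SA_f_commute)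
qed (use assms SA_pure_NE_exists SA_pure_NE_eps_pareto_efficient in auto)

end
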